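(* Let $\mathcal{H}$ be a separable Hilbert space, let $J$ be a finite or countably infinite index set, and let $(\rho_j)_{j\in J}$ be density operators on $\mathcal{H}$. Let $f:(0,1]^J\to\mathbb{R}$ be an evaluation function for uniform discrimination (defined in the context). Suppose the instrument $(\mathcal{I}_\omega)_{\omega\in J\cup\{?\}}$ is a uniform unambiguous discrimination measurement between $(\rho_j)_{j\in J}$ that is optimal with respect to $f$, and suppose that $\sup\{\operatorname{tr}[\mathcal{I}_j\rho_j]\mid j\in J\}<1$. Then the states $$\left(\frac{\mathcal{I}_?\rho_j}{\operatorname{tr}[\mathcal{I}_?\rho_j]}\right)_{j\in J}$$ (the post-measurement states conditioned on the inconclusive outcome $?$) are not uniformly distinguishable.
   Context: States are density operators $\rho$ on $\mathcal{H}$: trace-class operators with $\rho\geq 0$ and $\operatorname{tr}\rho=1$; $\mathfrak{T}(\mathcal{H})$ denotes the Banach space of trace-class operators. An instrument with countable outcome set $\Omega$ is a family $(\mathcal{I}_\omega)_{\omega\in\Omega}$ of trace-norm-bounded linear maps $\mathcal{I}_\omega:\mathfrak{T}(\mathcal{H})\to\mathfrak{T}(\mathcal{H})$ such that each $\mathcal{I}_\omega$ is completely positive (i.e. $\mathcal{I}_\omega\otimes\mathrm{id}_{\mathbb{C}^{n\times n}}$ is positive for all $n\in\mathbb{N}$) and $\operatorname{tr}[(\sum_\omega\mathcal{I}_\omega)\rho]=\operatorname{tr}\rho$ for all $\rho\in\mathfrak{T}(\mathcal{H})$. A uniform unambiguous discrimination measurement between states $(\rho_j)_{j\in J}$ is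 an instrument $(\mathcal{I}_\omega)_{\omega\in J\cup\{?\}}$ (with $?$ an extra "inconclusive" outcome not in $J$) such that $\operatorname{tr}[\mathcal{I}_j\rho_k]=0$ for all $j\neq k$ in $J$, and $\inf\{\operatorname{tr}[\mathcal{I}_j\rho_j]\mid j\in J\}>0$. States $(\rho_j)_{j\in J}$ are uniformly distinguishable if at least one uniform unambiguous discrimination measurement between them exists. An evaluation function for uniform discrimination is a function $f:(0,1]^J\to\mathbb{R}$ such that for all $(x_j),(y_j)\in(0,1]^J$, if $\inf\{x_j-y_j\mid j\in J\}>0$ then $f((x_j))-f((y_j))>0$. A uniform unambiguous discrimination measurement between $(\rho_j)_{j\in J}$ is optimal with respect to $f$ if no other uniform unambiguous discrimination measurement $(\mathcal{I}'_\omega)$ between $(\rho_j)_{j\in J}$ satisfies $f((\operatorname{tr}[\mathcal{I}'_j\rho_j])_j)>f((\operatorname{tr}[\mathcal{I}_j\rho_j])_j)$. *)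

theory Defs
  imports "HOL-Analysis.Analysis"
begin

text \<open>
  Concrete model of a separable Hilbert space: H = l2('b) for a countable
  (finite or countably infinite, nonempty) index type 'b of an orthonormal basis.
  Vectors are functions 'b => complex; (bounded) operators are represented by
  their matrices T i j = <e_i, T e_j> with respect to the standard basis.
\<close>

type_synonym 'b hvec = "'b \<Rightarrow> complex"
type_synonym 'b opr = "'b \<Rightarrow> 'b \<Rightarrow> complex"

definition l2 :: "'b hvec set" where
  "l2 = {v. (\<lambda>i. (cmod (v i))\<^sup>2) summable_on UNIV}"

definition l2norm :: "'b hvec \<Rightarrow> real" where
  "l2norm v = sqrt (\<Sum>\<^sub>\<infinity>i. (cmod (v i))\<^sup>2)"

definition hinner :: "'b hvec \<Rightarrow> 'b hvec \<Rightarrow> complex" where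
  "hinner u v = (\<Sum>\<^sub>\<infinity>i. cnj (u i) * v i)"

definition apply_op :: "'b opr \<Rightarrow> 'b hvec \<Rightarrow> 'b hvec" where
  "apply_op T v = (\<lambda>i. \<Sum>\<^sub>\<infinity>j. T i j * v j)"

definition bounded_opr :: "'b opr \<Rightarrow> bool" where
  "bounded_opr T \<longleftrightarrow>
     (\<forall>v\<in>l2. \<forall>i. (\<lambda>j. T i j * v j) summable_on UNIV) \<and>
     (\<exists>C. \<forall>v\<in>l2. apply_op T v \<in> l2 \<and> l2norm (apply_op T v) \<le> C * l2norm v)"

definition orthonormal_on :: "'b set \<Rightarrow> ('b \<Rightarrow> 'b hvec) \<Rightarrow> bool" where
  "orthonormal_on K e \<longleftrightarrow>
     (\<forall>k\<in>K. e k \<in> l2) \<and> (\<forall>k\<in>K. \<forall>k'\<in>K. hinner (e k) (e k') = (if k = k' then 1 else 0))"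

definition tn_sums :: "'b opr \<Rightarrow> real set" where
  "tn_sums T = {\<Sum>\<^sub>\<infinity>k\<in>K. cmod (hinner (f k) (apply_op T (e k))) | K e f.
                 orthonormal_on K e \<and> orthonormal_on K f}"

definition trace_class :: "'b opr \<Rightarrow> bool" where
  "trace_class T \<longleftrightarrow> bounded_opr T \<and>
     (\<exists>C. \<forall>K e f. orthonormal_on K e \<and> orthonormal_on K f \<longrightarrow>
        (\<lambda>k. cmod (hinner (f k) (apply_op T (e k)))) summable_on K \<and>
        (\<Sum>\<^sub>\<infinity>k\<in>K. cmod (hinner (f k) (apply_op T (e k)))) \<le> C)"

definition trace_norm :: "'b opr \<Rightarrow> real" where
  "trace_norm T = Sup (tn_sums T)"

definition trace :: "'b opr \<Rightarrow> complex" where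
  "trace T = (\<Sum>\<^sub>\<infinity>i. T i i)"

definition positive_opr :: "'b opr \<Rightarrow> bool" where
  "positive_opr T \<longleftrightarrow> bounded_opr T \<and>
     (\<forall>v\<in>l2. Im (hinner v (apply_op T v)) = 0 \<and> Re (hinner v (apply_op T v)) \<ge> 0)"

definition density_op :: "'b opr \<Rightarrow> bool" where
  "density_op \<rho> \<longleftrightarrow> trace_class \<rho> \<and> positive_opr \<rho> \<and> trace \<rho> = 1"

definition tc_map :: "('b opr \<Rightarrow> 'b opr) \<Rightarrow> bool" where
  "tc_map \<Phi> \<longleftrightarrow>
     (\<forall>T. trace_class T \<longrightarrow> trace_class (\<Phi> T)) \<and>
     (\<forall>S T a b. trace_class S \<longrightarrow> trace_class T \<longrightarrow>
        \<Phi> (\<lambda>i j. a * S i j + b * T i j) = (\<lambda>i j. a * \<Phi> S i j + b * \<Phi> T i j)) \<and>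
     (\<exists>C. \<forall>T. trace_class T \<longrightarrow> trace_norm (\<Phi> T) \<le> C * trace_norm T)"

text \<open>Positivity of an n x n block operator (T_ab) on H (x) C^n = H^n.\<close>
definition block_positive :: "nat \<Rightarrow> (nat \<Rightarrow> nat \<Rightarrow> 'b opr) \<Rightarrow> bool" where
  "block_positive n Tb \<longleftrightarrow>
     (\<forall>a<n. \<forall>b<n. bounded_opr (Tb a b)) \<and>
     (\<forall>v :: nat \<Rightarrow> 'b hvec. (\<forall>a<n. v a \<in> l2) \<longrightarrow>
        Im (\<Sum>a<n. \<Sum>b<n. hinner (v a) (apply_op (Tb a b) (v b))) = 0 \<and>
        Re (\<Sum>a<n. \<Sum>b<n. hinner (v a) (apply_op (Tb a b) (v b))) \<ge> 0)"

text \<open>Complete positivity: Phi (x) id_{C^{n x n}} is positive on T(H (x) C^n) for all n.\<close>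
definition completely_positive :: "('b opr \<Rightarrow> 'b opr) \<Rightarrow> bool" where
  "completely_positive \<Phi> \<longleftrightarrow>
     (\<forall>n Tb. (\<forall>a<n. \<forall>b<n. trace_class (Tb a b)) \<and> block_positive n Tb \<longrightarrow>
        block_positive n (\<lambda>a b. \<Phi> (Tb a b)))"

definition instrument :: "('o::countable \<Rightarrow> 'b opr \<Rightarrow> 'b opr) \<Rightarrow> bool" where
  "instrument I \<longleftrightarrow>
     (\<forall>\<omega>. tc_map (I \<omega>) \<and> completely_positive (I \<omega>)) \<and>
     (\<forall>\<rho>. trace_class \<rho> \<longrightarrow> ((\<lambda>\<omega>. trace (I \<omega> \<rho>)) has_sum trace \<rho>) UNIV)"

text \<open>Outcome set J \<union> {?} is modelled as 'j option, with None = ?.\<close>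
definition uud_measurement :: "('j::countable \<Rightarrow> 'b opr) \<Rightarrow> ('j option \<Rightarrow> 'b opr \<Rightarrow> 'b opr) \<Rightarrow> bool" where
  "uud_measurement \<rho> I \<longleftrightarrow> instrument I \<and>
     (\<forall>j k. j \<noteq> k \<longrightarrow> trace (I (Some j) (\<rho> k)) = 0) \<and>
     (INF j. Re (trace (I (Some j) (\<rho> j)))) > 0"

definition uniformly_distinguishable :: "('j::countable \<Rightarrow> 'b opr) \<Rightarrow> bool" where
  "uniformly_distinguishable \<rho> \<longleftrightarrow> (\<exists>I. uud_measurement \<rho> I)"

definition evaluation_function :: "(('j \<Rightarrow> real) \<Rightarrow> real) \<Rightarrow> bool" where
  "evaluation_function f \<longleftrightarrow>
     (\<forall>x y. (\<forall>j. x j \<in> {0<..1}) \<longrightarrow> (\<forall>j. y j \<in> {0<..1}) \<longrightarrow>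
        (INF j. x j - y j) > 0 \<longrightarrow> f x - f y > 0)"

definition success_probs :: "('j \<Rightarrow> 'b opr) \<Rightarrow> ('j option \<Rightarrow> 'b opr \<Rightarrow> 'b opr) \<Rightarrow> 'j \<Rightarrow> real" where
  "success_probs \<rho> I = (\<lambda>j. Re (trace (I (Some j) (\<rho> j))))"

definition optimal_uud :: "(('j::countable \<Rightarrow> real) \<Rightarrow> real) \<Rightarrow> ('j \<Rightarrow> 'b opr) \<Rightarrow> ('j option \<Rightarrow> 'b opr \<Rightarrow> 'b opr) \<Rightarrow> bool" where
  "optimal_uud f \<rho> I \<longleftrightarrow> uud_measurement \<rho> I \<and>
     \<not> (\<exists>I'. uud_measurement \<rho> I' \<and> f (success_probs \<rho> I') > f (success_probs \<rho> I))"

end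

theory Submission
  imports Defs
begin

text \<open>
  Suppose the conditioned inconclusive states \<open>\<sigma>\<^sub>j = I\<^sub>? \<rho>\<^sub>j / tr (I\<^sub>? \<rho>\<^sub>j)\<close> were
  uniformly distinguished by some instrument \<open>I'\<close>. Running \<open>I\<close> and, on the outcome \<open>?\<close>,
  running \<open>I'\<close> afterwards gives a new instrument with outcomes \<open>J \<union> {?}\<close> that is still
  unambiguous. Its success probabilities are \<open>p\<^sub>j + (1 - p\<^sub>j) q\<^sub>j\<close>, where \<open>p\<^sub>j\<close> and \<open>q\<^sub>j\<close>
  are those of \<open>I\<close> and \<open>I'\<close>. Since \<open>1 - p\<^sub>j \<ge> 1 - sup p > 0\<close> and \<open>q\<^sub>j \<ge> inf q > 0\<close>,
  they exceed those of \<open>I\<close> uniformly, so the evaluation function strictly increases,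
  contradicting the optimality of \<open>I\<close>.
\<close>

section \<open>Square-summable sequences\<close>

definition basis_vec :: "'b \<Rightarrow> 'b hvec" where
  "basis_vec i = (\<lambda>k. if k = i then 1 else 0)"

lemma has_sum_singleton_support:
  assumes "\<And>j. j \<noteq> i \<Longrightarrow> g j = 0"
  shows "(g has_sum g i) UNIV"
proof -
  have "(g has_sum g i) UNIV \<longleftrightarrow> (g has_sum g i) {i}"
    by (rule has_sum_cong_neutral) (auto simp: assms)
  then show ?thesis
    using has_sum_finite[of "{i}" g] by simp
qed

lemma infsum_singleton_support:
  assumes "\<And>j. j \<noteq> i \<Longrightarrow> g j = 0"
  shows "infsum g UNIV = g i"
  by (rule infsumI[OF has_sum_singleton_support[OF assms]])

lemma basis_vec_l2: "basis_vec i \<in> l2"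
proof -
  have "((\<lambda>k. (cmod (basis_vec i k))\<^sup>2) has_sum (cmod (basis_vec i i))\<^sup>2) UNIV"
    by (rule has_sum_singleton_support) (simp add: basis_vec_def)
  then show ?thesis
    unfolding l2_def summable_on_def by blast
qed

lemma apply_op_basis_vec: "apply_op T (basis_vec i) = (\<lambda>k. T k i)"
  unfolding apply_op_def
  by (rule ext, subst infsum_singleton_support[where i=i]) (auto simp: basis_vec_def)

lemma hinner_basis_vec: "hinner (basis_vec i) w = w i"
  unfolding hinner_def
  by (subst infsum_singleton_support[where i=i]) (auto simp: basis_vec_def)

lemma orthonormal_basis_vec: "orthonormal_on UNIV basis_vec"
  unfolding orthonormal_on_def by (simp add: basis_vec_l2 hinner_basis_vec) (simp add: basis_vec_def)

lemma cmod_add_squared_le: "(cmod (a + b))\<^sup>2 \<le> 2 * (cmod a)\<^sup>2 + 2 * (cmod b)\<^sup>2"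
proof -
  have "(cmod (a + b))\<^sup>2 \<le> (cmod a + cmod b)\<^sup>2"
    by (intro power_mono norm_triangle_ineq) auto
  also have "\<dots> \<le> 2 * (cmod a)\<^sup>2 + 2 * (cmod b)\<^sup>2"
    using zero_le_power2[of "cmod a - cmod b"] unfolding power2_diff power2_sum by linarith
  finally show ?thesis .
qed

lemma l2_summable: "u \<in> l2 \<Longrightarrow> (\<lambda>i. (cmod (u i))\<^sup>2) summable_on UNIV"
  by (simp add: l2_def)

lemma l2norm_nonneg: "l2norm u \<ge> 0"
  unfolding l2norm_def by (simp add: infsum_nonneg)

lemma l2norm_squared: "(l2norm u)\<^sup>2 = (\<Sum>\<^sub>\<infinity>i. (cmod (u i))\<^sup>2)"
  unfolding l2norm_def by (simp add: infsum_nonneg)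

lemma l2_add:
  assumes "u \<in> l2" "v \<in> l2"
  shows "(\<lambda>i. u i + v i) \<in> l2"
    and "(l2norm (\<lambda>i. u i + v i))\<^sup>2 \<le> 2 * (l2norm u)\<^sup>2 + 2 * (l2norm v)\<^sup>2"
proof -
  have bound: "(\<lambda>i. 2 * (cmod (u i))\<^sup>2 + 2 * (cmod (v i))\<^sup>2) summable_on UNIV"
    using assms by (intro summable_on_add summable_on_cmult_right) (auto simp: l2_summable)
  have sum: "(\<lambda>i. (cmod (u i + v i))\<^sup>2) summable_on UNIV"
    by (rule summable_on_comparison_test[OF bound]) (auto simp: cmod_add_squared_le)
  then show "(\<lambda>i. u i + v i) \<in> l2"
    by (simp add: l2_def)
  have "(l2norm (\<lambda>i. u i + v i))\<^sup>2 \<le> (\<Sum>\<^sub>\<infinity>i. 2 * (cmod (u i))\<^sup>2 + 2 * (cmod (v i))\<^sup>2)"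
    unfolding l2norm_squared by (rule infsum_mono[OF sum bound]) (simp add: cmod_add_squared_le)
  also have "\<dots> = 2 * (l2norm u)\<^sup>2 + 2 * (l2norm v)\<^sup>2"
    using assms by (subst infsum_add)
      (auto simp: l2_summable summable_on_cmult_right infsum_cmult_right l2norm_squared)
  finally show "(l2norm (\<lambda>i. u i + v i))\<^sup>2 \<le> 2 * (l2norm u)\<^sup>2 + 2 * (l2norm v)\<^sup>2" .
qed

lemma l2_inner_summable:
  assumes "u \<in> l2" "v \<in> l2"
  shows "(\<lambda>i. cnj (u i) * v i) summable_on UNIV"
proof -
  have bound: "(\<lambda>i. (1/2) * ((cmod (u i))\<^sup>2 + (cmod (v i))\<^sup>2)) summable_on UNIV"
    using assms by (intro summable_on_cmult_right summable_on_add) (auto simp: l2_summable)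
  have "norm (cnj (u i) * v i) \<le> (1/2) * ((cmod (u i))\<^sup>2 + (cmod (v i))\<^sup>2)" for i
    using zero_le_power2[of "cmod (u i) - cmod (v i)"]
    unfolding power2_diff by (simp add: norm_mult)
  then have "(\<lambda>i. norm (cnj (u i) * v i)) summable_on UNIV"
    by (intro summable_on_comparison_test[OF bound]) auto
  then show ?thesis
    by (rule abs_summable_summable)
qed

lemma hinner_add_right:
  assumes "u \<in> l2" "x \<in> l2" "y \<in> l2"
  shows "hinner u (\<lambda>i. x i + y i) = hinner u x + hinner u y"
  unfolding hinner_def using l2_inner_summable[OF assms(1,2)] l2_inner_summable[OF assms(1,3)]
  by (subst infsum_add[symmetric]) (auto simp: distrib_left)

section \<open>Bounded and trace-class operators\<close>

lemma bounded_opr_row_summable: "bounded_opr A \<Longrightarrow> v \<in> l2 \<Longrightarrow> (\<lambda>j. A i j * v j) summable_on UNIV"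
  unfolding bounded_opr_def by blast

lemma bounded_opr_apply_l2: "bounded_opr A \<Longrightarrow> v \<in> l2 \<Longrightarrow> apply_op A v \<in> l2"
  unfolding bounded_opr_def by blast

lemma apply_op_add:
  assumes "bounded_opr A" "bounded_opr B" "v \<in> l2"
  shows "apply_op (\<lambda>i j. A i j + B i j) v = (\<lambda>i. apply_op A v i + apply_op B v i)"
  unfolding apply_op_def
  using bounded_opr_row_summable[OF assms(1,3)] bounded_opr_row_summable[OF assms(2,3)]
  by (intro ext, subst infsum_add[symmetric]) (auto simp: distrib_right)

lemma hinner_apply_op_add:
  assumes "bounded_opr A" "bounded_opr B" "u \<in> l2" "v \<in> l2"
  shows "hinner u (apply_op (\<lambda>i j. A i j + B i j) v) = hinner u (apply_op A v) + hinner u (apply_op B v)"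
  unfolding apply_op_add[OF assms(1,2,4)]
  by (rule hinner_add_right) (use assms bounded_opr_apply_l2 in auto)

lemma bounded_opr_add:
  assumes A: "bounded_opr A" and B: "bounded_opr B"
  shows "bounded_opr (\<lambda>i j. A i j + B i j)"
proof -
  obtain CA where CA: "\<forall>v\<in>l2. l2norm (apply_op A v) \<le> CA * l2norm v"
    using A unfolding bounded_opr_def by blast
  obtain CB where CB: "\<forall>v\<in>l2. l2norm (apply_op B v) \<le> CB * l2norm v"
    using B unfolding bounded_opr_def by blast
  define C where "C = sqrt (2 * CA\<^sup>2 + 2 * CB\<^sup>2)"
  have rows: "(\<lambda>j. (A i j + B i j) * v j) summable_on UNIV" if "v \<in> l2" for v i
    using summable_on_add[OF bounded_opr_row_summable[OF A that] bounded_opr_row_summable[OF B that]]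
    by (simp add: distrib_right)
  have norm: "apply_op (\<lambda>i j. A i j + B i j) v \<in> l2 \<and>
      l2norm (apply_op (\<lambda>i j. A i j + B i j) v) \<le> C * l2norm v" if v: "v \<in> l2" for v
  proof -
    have l2: "apply_op A v \<in> l2" "apply_op B v \<in> l2"
      using bounded_opr_apply_l2 A B v by auto
    have "l2norm (apply_op A v) ^ 2 \<le> (CA * l2norm v) ^ 2"
         "l2norm (apply_op B v) ^ 2 \<le> (CB * l2norm v) ^ 2"
      using CA CB v by (auto intro!: power_mono simp: l2norm_nonneg)
    then have "(l2norm (apply_op (\<lambda>i j. A i j + B i j) v))\<^sup>2 \<le> (C * l2norm v)\<^sup>2"
      using l2_add(2)[OF l2] unfolding apply_op_add[OF A B v] C_def
      by (simp add: power_mult_distrib algebra_simps)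
    then have "l2norm (apply_op (\<lambda>i j. A i j + B i j) v) \<le> C * l2norm v"
      by (rule power2_le_imp_le) (simp add: C_def l2norm_nonneg)
    then show ?thesis
      using l2_add(1)[OF l2] unfolding apply_op_add[OF A B v] by simp
  qed
  show ?thesis
    unfolding bounded_opr_def using rows norm by blast
qed

lemma trace_class_bounded: "trace_class T \<Longrightarrow> bounded_opr T"
  unfolding trace_class_def by blast

lemma trace_class_boundE:
  assumes "trace_class T"
  obtains C where "\<And>K e f. orthonormal_on K e \<Longrightarrow> orthonormal_on K f \<Longrightarrow>
      (\<lambda>k. cmod (hinner (f k) (apply_op T (e k)))) summable_on K \<and>
      (\<Sum>\<^sub>\<infinity>k\<in>K. cmod (hinner (f k) (apply_op T (e k)))) \<le> C"
  using assms unfolding trace_class_def by blast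

lemma orthonormal_on_empty: "orthonormal_on {} e"
  unfolding orthonormal_on_def by simp

lemma tn_sums_bdd_above: "trace_class T \<Longrightarrow> bdd_above (tn_sums T)"
  by (erule trace_class_boundE) (auto simp: tn_sums_def bdd_above_def)

lemma trace_norm_ge:
  assumes "trace_class T" "orthonormal_on K e" "orthonormal_on K f"
  shows "(\<Sum>\<^sub>\<infinity>k\<in>K. cmod (hinner (f k) (apply_op T (e k)))) \<le> trace_norm T"
  unfolding trace_norm_def using assms
  by (intro cSup_upper tn_sums_bdd_above) (auto simp: tn_sums_def)

lemma trace_norm_nonneg: "trace_class T \<Longrightarrow> trace_norm T \<ge> 0"
  using trace_norm_ge[of T "{}" "\<lambda>_ _. 0" "\<lambda>_ _. 0"] by (simp add: orthonormal_on_empty)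

lemma trace_class_add:
  assumes A: "trace_class A" and B: "trace_class B"
  shows "trace_class (\<lambda>i j. A i j + B i j)"
    and "trace_norm (\<lambda>i j. A i j + B i j) \<le> trace_norm A + trace_norm B"
proof -
  have bA: "bounded_opr A" and bB: "bounded_opr B"
    using A B trace_class_bounded by auto
  obtain CA where CA: "\<And>K e f. orthonormal_on K e \<Longrightarrow> orthonormal_on K f \<Longrightarrow>
      (\<lambda>k. cmod (hinner (f k) (apply_op A (e k)))) summable_on K \<and>
      (\<Sum>\<^sub>\<infinity>k\<in>K. cmod (hinner (f k) (apply_op A (e k)))) \<le> CA"
    using trace_class_boundE[OF A] by blast
  obtain CB where CB: "\<And>K e f. orthonormal_on K e \<Longrightarrow> orthonormal_on K f \<Longrightarrow>
      (\<lambda>k. cmod (hinner (f k) (apply_op B (e k)))) summable_on K \<and>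
      (\<Sum>\<^sub>\<infinity>k\<in>K. cmod (hinner (f k) (apply_op B (e k)))) \<le> CB"
    using trace_class_boundE[OF B] by blast
  have sums: "(\<lambda>k. cmod (hinner (f k) (apply_op (\<lambda>i j. A i j + B i j) (e k)))) summable_on K \<and>
      (\<Sum>\<^sub>\<infinity>k\<in>K. cmod (hinner (f k) (apply_op (\<lambda>i j. A i j + B i j) (e k)))) \<le>
      (\<Sum>\<^sub>\<infinity>k\<in>K. cmod (hinner (f k) (apply_op A (e k)))) +
      (\<Sum>\<^sub>\<infinity>k\<in>K. cmod (hinner (f k) (apply_op B (e k))))"
    if on: "orthonormal_on K e" "orthonormal_on K f" for K e f
  proof -
    let ?a = "\<lambda>k. cmod (hinner (f k) (apply_op A (e k)))"
    let ?b = "\<lambda>k. cmod (hinner (f k) (apply_op B (e k)))"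
    let ?c = "\<lambda>k. cmod (hinner (f k) (apply_op (\<lambda>i j. A i j + B i j) (e k)))"
    have sa: "?a summable_on K" and sb: "?b summable_on K"
      using CA[OF on] CB[OF on] by auto
    have sab: "(\<lambda>k. ?a k + ?b k) summable_on K"
      by (rule summable_on_add[OF sa sb])
    have le: "?c k \<le> ?a k + ?b k" if "k \<in> K" for k
      using on that unfolding orthonormal_on_def
      by (simp add: hinner_apply_op_add[OF bA bB] norm_triangle_ineq)
    have sc: "?c summable_on K"
      by (rule summable_on_comparison_test[OF sab]) (use le in auto)
    have "infsum ?c K \<le> infsum (\<lambda>k. ?a k + ?b k) K"
      by (rule infsum_mono[OF sc sab]) (use le in auto)
    with sc show ?thesis
      by (simp add: infsum_add[OF sa sb])
  qed
  show "trace_class (\<lambda>i j. A i j + B i j)"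
    unfolding trace_class_def
  proof (intro conjI exI allI impI)
    show "bounded_opr (\<lambda>i j. A i j + B i j)"
      by (rule bounded_opr_add[OF bA bB])
  next
    fix K and e f :: "'a \<Rightarrow> 'a hvec"
    assume "orthonormal_on K e \<and> orthonormal_on K f"
    then have on: "orthonormal_on K e" "orthonormal_on K f"
      by auto
    show "(\<lambda>k. cmod (hinner (f k) (apply_op (\<lambda>i j. A i j + B i j) (e k)))) summable_on K"
      using sums[OF on] by blast
    show "(\<Sum>\<^sub>\<infinity>k\<in>K. cmod (hinner (f k) (apply_op (\<lambda>i j. A i j + B i j) (e k)))) \<le> CA + CB"
      using sums[OF on] CA[OF on] CB[OF on] by linarith
  qed
  show "trace_norm (\<lambda>i j. A i j + B i j) \<le> trace_norm A + trace_norm B"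
    unfolding trace_norm_def
  proof (rule cSup_least)
    show "tn_sums (\<lambda>i j. A i j + B i j) \<noteq> {}"
      unfolding tn_sums_def using orthonormal_on_empty by blast
  next
    fix x assume "x \<in> tn_sums (\<lambda>i j. A i j + B i j)"
    then obtain K e f where on: "orthonormal_on K e" "orthonormal_on K f"
      and x: "x = (\<Sum>\<^sub>\<infinity>k\<in>K. cmod (hinner (f k) (apply_op (\<lambda>i j. A i j + B i j) (e k))))"
      unfolding tn_sums_def by blast
    show "x \<le> Sup (tn_sums A) + Sup (tn_sums B)"
      using sums[OF on] trace_norm_ge[OF A on] trace_norm_ge[OF B on] x
      unfolding trace_norm_def by linarith
  qed
qed

lemma trace_class_diag_summable:
  assumes "trace_class T"
  shows "(\<lambda>i. T i i) summable_on UNIV"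
proof -
  obtain C where C: "\<And>K e f. orthonormal_on K e \<Longrightarrow> orthonormal_on K f \<Longrightarrow>
      (\<lambda>k. cmod (hinner (f k) (apply_op T (e k)))) summable_on K \<and>
      (\<Sum>\<^sub>\<infinity>k\<in>K. cmod (hinner (f k) (apply_op T (e k)))) \<le> C"
    using trace_class_boundE[OF assms] by blast
  have "(\<lambda>k. cmod (hinner (basis_vec k) (apply_op T (basis_vec k)))) summable_on UNIV"
    using C[OF orthonormal_basis_vec orthonormal_basis_vec] by (rule conjunct1)
  then have "(\<lambda>k. norm (T k k)) summable_on UNIV"
    by (simp add: hinner_basis_vec apply_op_basis_vec)
  then show ?thesis
    by (rule abs_summable_summable)
qed

lemma trace_add:
  assumes "trace_class A" "trace_class B"
  shows "trace (\<lambda>i j. A i j + B i j) = trace A + trace B"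
  unfolding trace_def
  by (rule infsum_add[OF trace_class_diag_summable[OF assms(1)] trace_class_diag_summable[OF assms(2)]])

lemma trace_scale: "trace (\<lambda>i j. c * T i j) = c * trace T"
  unfolding trace_def by (rule infsum_cmult_right')

lemma positive_opr_trace:
  assumes "trace_class T" "positive_opr T"
  shows "Im (trace T) = 0" "Re (trace T) \<ge> 0"
proof -
  have diag: "Im (T i i) = 0" "Re (T i i) \<ge> 0" for i
    using assms(2) basis_vec_l2[of i] unfolding positive_opr_def
    by (auto simp: hinner_basis_vec apply_op_basis_vec)
  have s: "(\<lambda>i. T i i) summable_on UNIV"
    by (rule trace_class_diag_summable[OF assms(1)])
  show "Im (trace T) = 0"
    unfolding trace_def infsum_Im[OF s, symmetric] diag by simp
  show "Re (trace T) \<ge> 0"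
    unfolding trace_def infsum_Re[OF s, symmetric] by (rule infsum_nonneg) (use diag in auto)
qed

section \<open>Completely positive trace-class maps\<close>

lemma tc_map_trace_class: "tc_map \<Phi> \<Longrightarrow> trace_class T \<Longrightarrow> trace_class (\<Phi> T)"
  unfolding tc_map_def by blast

lemma tc_map_linear:
  "tc_map \<Phi> \<Longrightarrow> trace_class S \<Longrightarrow> trace_class T \<Longrightarrow>
   \<Phi> (\<lambda>i j. a * S i j + b * T i j) = (\<lambda>i j. a * \<Phi> S i j + b * \<Phi> T i j)"
  unfolding tc_map_def by blast

lemma tc_map_boundE:
  assumes "tc_map \<Phi>"
  obtains C where "\<And>T. trace_class T \<Longrightarrow> trace_norm (\<Phi> T) \<le> C * trace_norm T"
  using assms unfolding tc_map_def by blast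

lemma tc_map_scale:
  assumes "tc_map \<Phi>" "trace_class T"
  shows "\<Phi> (\<lambda>i j. c * T i j) = (\<lambda>i j. c * \<Phi> T i j)"
  using tc_map_linear[OF assms assms(2), of c 0] by simp

lemma tc_map_comp:
  assumes P: "tc_map \<Phi>" and Q: "tc_map \<Psi>"
  shows "tc_map (\<lambda>T. \<Phi> (\<Psi> T))"
proof -
  obtain CP where CP: "\<And>T. trace_class T \<Longrightarrow> trace_norm (\<Phi> T) \<le> CP * trace_norm T"
    using tc_map_boundE[OF P] by blast
  obtain CQ where CQ: "\<And>T. trace_class T \<Longrightarrow> trace_norm (\<Psi> T) \<le> CQ * trace_norm T"
    using tc_map_boundE[OF Q] by blast
  have bound: "trace_norm (\<Phi> (\<Psi> T)) \<le> (max CP 0 * CQ) * trace_norm T" if T: "trace_class T" for T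
  proof -
    have tq: "trace_class (\<Psi> T)"
      by (rule tc_map_trace_class[OF Q T])
    have "trace_norm (\<Phi> (\<Psi> T)) \<le> max CP 0 * trace_norm (\<Psi> T)"
    proof -
      have "CP * trace_norm (\<Psi> T) \<le> max CP 0 * trace_norm (\<Psi> T)"
        using trace_norm_nonneg[OF tq] by (intro mult_right_mono) auto
      then show ?thesis
        using CP[OF tq] by linarith
    qed
    also have "\<dots> \<le> max CP 0 * (CQ * trace_norm T)"
      using CQ[OF T] by (intro mult_left_mono) auto
    finally show ?thesis
      by (simp add: mult.assoc)
  qed
  show ?thesis
    unfolding tc_map_def
  proof (intro conjI allI impI exI[of _ "max CP 0 * CQ"])
    fix S T :: "'a opr" and a b
    assume S: "trace_class S" and T: "trace_class T"
    show "\<Phi> (\<Psi> (\<lambda>i j. a * S i j + b * T i j)) = (\<lambda>i j. a * \<Phi> (\<Psi> S) i j + b * \<Phi> (\<Psi> T) i j)"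
      unfolding tc_map_linear[OF Q S T]
      by (rule tc_map_linear[OF P tc_map_trace_class[OF Q S] tc_map_trace_class[OF Q T]])
  qed (use P Q bound tc_map_trace_class in blast)+
qed

lemma tc_map_add:
  assumes P: "tc_map \<Phi>" and Q: "tc_map \<Psi>"
  shows "tc_map (\<lambda>T i j. \<Phi> T i j + \<Psi> T i j)"
proof -
  obtain CP where CP: "\<And>T. trace_class T \<Longrightarrow> trace_norm (\<Phi> T) \<le> CP * trace_norm T"
    using tc_map_boundE[OF P] by blast
  obtain CQ where CQ: "\<And>T. trace_class T \<Longrightarrow> trace_norm (\<Psi> T) \<le> CQ * trace_norm T"
    using tc_map_boundE[OF Q] by blast
  show ?thesis
    unfolding tc_map_def
  proof (intro conjI allI impI exI[of _ "CP + CQ"])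
    fix T :: "'a opr"
    assume T: "trace_class T"
    show "trace_class (\<lambda>i j. \<Phi> T i j + \<Psi> T i j)"
      by (rule trace_class_add(1)[OF tc_map_trace_class[OF P T] tc_map_trace_class[OF Q T]])
    have "trace_norm (\<lambda>i j. \<Phi> T i j + \<Psi> T i j) \<le> trace_norm (\<Phi> T) + trace_norm (\<Psi> T)"
      by (rule trace_class_add(2)[OF tc_map_trace_class[OF P T] tc_map_trace_class[OF Q T]])
    also have "\<dots> \<le> (CP + CQ) * trace_norm T"
      using CP[OF T] CQ[OF T] by (simp add: distrib_right)
    finally show "trace_norm (\<lambda>i j. \<Phi> T i j + \<Psi> T i j) \<le> (CP + CQ) * trace_norm T" .
  next
    fix S T :: "'a opr" and a b
    assume S: "trace_class S" and T: "trace_class T"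
    show "(\<lambda>i j. \<Phi> (\<lambda>i j. a * S i j + b * T i j) i j + \<Psi> (\<lambda>i j. a * S i j + b * T i j) i j) =
          (\<lambda>i j. a * (\<Phi> S i j + \<Psi> S i j) + b * (\<Phi> T i j + \<Psi> T i j))"
      unfolding tc_map_linear[OF P S T] tc_map_linear[OF Q S T] by (simp add: algebra_simps)
  qed
qed

lemma completely_positiveD:
  assumes "completely_positive \<Phi>" "\<forall>a<n. \<forall>b<n. trace_class (Tb a b)" "block_positive n Tb"
  shows "block_positive n (\<lambda>a b. \<Phi> (Tb a b))"
  using assms unfolding completely_positive_def by blast

lemma block_positive_bounded:
  "block_positive n Tb \<Longrightarrow> a < n \<Longrightarrow> b < n \<Longrightarrow> bounded_opr (Tb a b)"
  unfolding block_positive_def by blast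

lemma block_positive_form:
  assumes "block_positive n Tb" "\<forall>a<n. v a \<in> l2"
  shows "Im (\<Sum>a<n. \<Sum>b<n. hinner (v a) (apply_op (Tb a b) (v b))) = 0"
    and "Re (\<Sum>a<n. \<Sum>b<n. hinner (v a) (apply_op (Tb a b) (v b))) \<ge> 0"
  using assms unfolding block_positive_def by blast+

lemma block_positive_one_iff: "block_positive 1 (\<lambda>a b. T) \<longleftrightarrow> positive_opr T"
proof
  assume pos: "block_positive 1 (\<lambda>a b. T)"
  show "positive_opr T"
    unfolding positive_opr_def
  proof (intro conjI ballI)
    show "bounded_opr T"
      using block_positive_bounded[OF pos] by simp
    fix v :: "'a hvec"
    assume "v \<in> l2"
    then show "Im (hinner v (apply_op T v)) = 0" "0 \<le> Re (hinner v (apply_op T v))"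
      using block_positive_form[OF pos, of "\<lambda>_. v"] by simp_all
  qed
qed (simp add: block_positive_def positive_opr_def)

lemma completely_positive_imp_positive:
  assumes "completely_positive \<Phi>" "trace_class T" "positive_opr T"
  shows "positive_opr (\<Phi> T)"
proof -
  have "block_positive 1 (\<lambda>a b. \<Phi> T)"
    by (rule completely_positiveD[OF assms(1)]) (use assms(2,3) block_positive_one_iff in auto)
  then show ?thesis
    using block_positive_one_iff by blast
qed

lemma completely_positive_comp:
  assumes "tc_map \<Psi>" "completely_positive \<Phi>" "completely_positive \<Psi>"
  shows "completely_positive (\<lambda>T. \<Phi> (\<Psi> T))"
  unfolding completely_positive_def
  using assms completely_positiveD tc_map_trace_class by metis

lemma completely_positive_add:
  assumes cP: "completely_positive \<Phi>" and cQ: "completely_positive \<Psi>"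
  shows "completely_positive (\<lambda>T i j. \<Phi> T i j + \<Psi> T i j)"
  unfolding completely_positive_def
proof (intro allI impI)
  fix n and Tb :: "nat \<Rightarrow> nat \<Rightarrow> 'a opr"
  assume "(\<forall>a<n. \<forall>b<n. trace_class (Tb a b)) \<and> block_positive n Tb"
  then have P: "block_positive n (\<lambda>a b. \<Phi> (Tb a b))" and Q: "block_positive n (\<lambda>a b. \<Psi> (Tb a b))"
    using completely_positiveD[OF cP] completely_positiveD[OF cQ] by auto
  show "block_positive n (\<lambda>a b i j. \<Phi> (Tb a b) i j + \<Psi> (Tb a b) i j)"
    unfolding block_positive_def
  proof (intro conjI allI impI)
    fix a b
    assume "a < n" "b < n"
    then show "bounded_opr (\<lambda>i j. \<Phi> (Tb a b) i j + \<Psi> (Tb a b) i j)"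
      using block_positive_bounded[OF P] block_positive_bounded[OF Q] bounded_opr_add by blast
  next
    fix v :: "nat \<Rightarrow> 'a hvec"
    assume v: "\<forall>a<n. v a \<in> l2"
    have split: "(\<Sum>a<n. \<Sum>b<n. hinner (v a) (apply_op (\<lambda>i j. \<Phi> (Tb a b) i j + \<Psi> (Tb a b) i j) (v b))) =
        (\<Sum>a<n. \<Sum>b<n. hinner (v a) (apply_op (\<Phi> (Tb a b)) (v b))) +
        (\<Sum>a<n. \<Sum>b<n. hinner (v a) (apply_op (\<Psi> (Tb a b)) (v b)))"
      unfolding sum.distrib[symmetric] using v block_positive_bounded[OF P] block_positive_bounded[OF Q]
      by (intro sum.cong refl hinner_apply_op_add) auto
    show "Im (\<Sum>a<n. \<Sum>b<n. hinner (v a) (apply_op (\<lambda>i j. \<Phi> (Tb a b) i j + \<Psi> (Tb a b) i j) (v b))) = 0"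
      "Re (\<Sum>a<n. \<Sum>b<n. hinner (v a) (apply_op (\<lambda>i j. \<Phi> (Tb a b) i j + \<Psi> (Tb a b) i j) (v b))) \<ge> 0"
      unfolding split using block_positive_form[OF P v] block_positive_form[OF Q v] by simp_all
  qed
qed

section \<open>Instruments and unambiguous discrimination\<close>

lemma instrument_tc_map: "instrument I \<Longrightarrow> tc_map (I \<omega>)"
  unfolding instrument_def by blast

lemma instrument_completely_positive: "instrument I \<Longrightarrow> completely_positive (I \<omega>)"
  unfolding instrument_def by blast

lemma instrument_has_sum_trace:
  "instrument I \<Longrightarrow> trace_class T \<Longrightarrow> ((\<lambda>\<omega>. trace (I \<omega> T)) has_sum trace T) UNIV"
  unfolding instrument_def by blast

lemma instrument_trace_nonneg:
  assumes "instrument I" "trace_class T" "positive_opr T"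
  shows "Im (trace (I \<omega> T)) = 0" "Re (trace (I \<omega> T)) \<ge> 0"
  using positive_opr_trace tc_map_trace_class completely_positive_imp_positive assms
    instrument_tc_map instrument_completely_positive by metis+

fun refine_inconclusive ::
  "('j option \<Rightarrow> 'b opr \<Rightarrow> 'b opr) \<Rightarrow> ('j option \<Rightarrow> 'b opr \<Rightarrow> 'b opr) \<Rightarrow> 'j option \<Rightarrow> 'b opr \<Rightarrow> 'b opr"
where
  "refine_inconclusive I I' None = (\<lambda>T. I' None (I None T))"
| "refine_inconclusive I I' (Some j) = (\<lambda>T a b. I (Some j) T a b + I' (Some j) (I None T) a b)"

lemma trace_refine_inconclusive_Some:
  assumes "instrument I" "instrument I'" "trace_class T"
  shows "trace (refine_inconclusive I I' (Some j) T) = trace (I (Some j) T) + trace (I' (Some j) (I None T))"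
  using assms by (simp add: trace_add tc_map_trace_class instrument_tc_map)

lemma instrument_refine_inconclusive:
  assumes I: "instrument I" and I': "instrument I'"
  shows "instrument (refine_inconclusive I I')"
proof -
  have maps: "tc_map (refine_inconclusive I I' \<omega>) \<and> completely_positive (refine_inconclusive I I' \<omega>)" for \<omega>
    using assms by (cases \<omega>) (simp_all add: instrument_tc_map instrument_completely_positive
        tc_map_comp tc_map_add completely_positive_comp completely_positive_add)
  have "((\<lambda>\<omega>. trace (refine_inconclusive I I' \<omega> T)) has_sum trace T) UNIV" if T: "trace_class T" for T
  proof -
    let ?first = "\<lambda>\<omega>. trace (I \<omega> T)"
    let ?second = "\<lambda>\<omega>. trace (I' \<omega> (I None T))"
    let ?at_None = "\<lambda>\<omega>. if \<omega> = None then ?first None else 0"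
    txt \<open>The outcome \<open>?\<close> of \<open>I\<close>, of weight \<open>tr (I None T)\<close>, is traded for all outcomes of \<open>I'\<close>.\<close>
    have at_None: "(?at_None has_sum ?first None) UNIV"
      using has_sum_singleton_support[of None ?at_None, OF if_not_P] by simp
    have "((\<lambda>\<omega>. ?first \<omega> + - ?at_None \<omega> + ?second \<omega>) has_sum
        (trace T + - ?first None + trace (I None T))) UNIV"
      by (intro has_sum_add has_sum_uminusI at_None instrument_has_sum_trace T I I'
          tc_map_trace_class[OF instrument_tc_map[OF I]])
    moreover have "(\<lambda>\<omega>. ?first \<omega> + - ?at_None \<omega> + ?second \<omega>) = (\<lambda>\<omega>. trace (refine_inconclusive I I' \<omega> T))"
    proof
      fix \<omega>
      show "?first \<omega> + - ?at_None \<omega> + ?second \<omega> = trace (refine_inconclusive I I' \<omega> T)"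
        using trace_refine_inconclusive_Some[OF I I' T] by (cases \<omega>) simp_all
    qed
    ultimately show ?thesis
      by simp
  qed
  then show ?thesis
    unfolding instrument_def using maps by blast
qed

lemma success_probs_le_1:
  assumes "instrument I" "density_op (\<rho> j)"
  shows "success_probs \<rho> I j \<le> 1"
proof -
  have tc: "trace_class (\<rho> j)" and pos: "positive_opr (\<rho> j)" and tr: "trace (\<rho> j) = 1"
    using assms(2) unfolding density_op_def by auto
  have "((\<lambda>\<omega>. Re (trace (I \<omega> (\<rho> j)))) has_sum 1) UNIV"
    using has_sum_Re[OF instrument_has_sum_trace[OF assms(1) tc]] tr by simp
  then have "(\<Sum>\<omega>\<in>{Some j}. Re (trace (I \<omega> (\<rho> j)))) \<le> 1"
    by (rule finite_sum_le_has_sum) (auto intro: instrument_trace_nonneg[OF assms(1) tc pos])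
  then show ?thesis
    by (simp add: success_probs_def)
qed

lemma success_probs_pos:
  assumes "\<forall>j. density_op (\<rho> j)" "uud_measurement \<rho> I"
  shows "success_probs \<rho> I j > 0"
proof -
  have nonneg: "success_probs \<rho> I k \<ge> 0" for k
    using assms instrument_trace_nonneg(2)
    unfolding uud_measurement_def density_op_def success_probs_def by blast
  have "(INF k. success_probs \<rho> I k) \<le> success_probs \<rho> I j"
    using nonneg by (intro cINF_lower bdd_belowI[of _ 0]) auto
  moreover have "(INF k. success_probs \<rho> I k) > 0"
    using assms(2) unfolding uud_measurement_def success_probs_def by simp
  ultimately show ?thesis
    by linarith
qed

lemma success_probs_mem_unit_interval:
  assumes "\<forall>j. density_op (\<rho> j)" "uud_measurement \<rho> I"
  shows "success_probs \<rho> I j \<in> {0<..1}"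
  using success_probs_pos[OF assms] success_probs_le_1[of I \<rho> j] assms
  unfolding uud_measurement_def by auto

lemma trace_inconclusive:
  assumes "\<forall>j. density_op (\<rho> j)" "uud_measurement \<rho> I"
  shows "trace (I None (\<rho> j)) = complex_of_real (1 - success_probs \<rho> I j)"
proof -
  have I: "instrument I" and unamb: "\<And>k. k \<noteq> j \<Longrightarrow> trace (I (Some k) (\<rho> j)) = 0"
    using assms(2) unfolding uud_measurement_def by auto
  have tc: "trace_class (\<rho> j)" and pos: "positive_opr (\<rho> j)" and tr: "trace (\<rho> j) = 1"
    using assms(1) unfolding density_op_def by auto
  let ?g = "\<lambda>\<omega>. trace (I \<omega> (\<rho> j))"
  have "(?g has_sum 1) UNIV"
    using instrument_has_sum_trace[OF I tc] tr by simp
  moreover have "(?g has_sum 1) UNIV \<longleftrightarrow> (?g has_sum 1) {None, Some j}"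
    by (rule has_sum_cong_neutral) (auto split: option.splits, metis unamb)
  ultimately have "?g None + ?g (Some j) = 1"
    using has_sum_finite[of "{None, Some j}" ?g] has_sum_unique by fastforce
  moreover have "?g (Some j) = complex_of_real (success_probs \<rho> I j)"
    using instrument_trace_nonneg(1)[OF I tc pos]
    by (simp add: success_probs_def complex_eq_iff)
  ultimately show ?thesis
    by (simp add: algebra_simps)
qed

section \<open>Conditioning on the inconclusive outcome\<close>

definition normalized :: "'b opr \<Rightarrow> 'b opr" where
  "normalized T = (\<lambda>a b. T a b / trace T)"

lemma trace_tc_map_normalized:
  assumes "tc_map \<Phi>" "trace_class T" "trace T \<noteq> 0"
  shows "trace (\<Phi> T) = trace T * trace (\<Phi> (normalized T))"
proof -
  have "\<Phi> (normalized T) = (\<lambda>a b. (1 / trace T) * \<Phi> T a b)"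
    unfolding normalized_def using tc_map_scale[OF assms(1,2), of "1 / trace T"] by simp
  then have "trace (\<Phi> (normalized T)) = (1 / trace T) * trace (\<Phi> T)"
    by (simp only: trace_scale)
  then show ?thesis
    using assms(3) by simp
qed

lemma trace_refine_inconclusive_normalized:
  assumes dens: "\<forall>j. density_op (\<rho> j)" and uud: "uud_measurement \<rho> I"
    and I': "instrument I'" and undecided: "success_probs \<rho> I k < 1"
  shows "trace (refine_inconclusive I I' (Some j) (\<rho> k)) =
    trace (I (Some j) (\<rho> k)) +
    complex_of_real (1 - success_probs \<rho> I k) * trace (I' (Some j) (normalized (I None (\<rho> k))))"
proof -
  have I: "instrument I"
    using uud unfolding uud_measurement_def by blast
  have tc: "trace_class (\<rho> k)"
    using dens unfolding density_op_def by blast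
  have "trace (I None (\<rho> k)) \<noteq> 0"
    using trace_inconclusive[OF dens uud] undecided by simp
  then show ?thesis
    using trace_refine_inconclusive_Some[OF I I' tc] trace_inconclusive[OF dens uud]
      trace_tc_map_normalized[OF instrument_tc_map[OF I'] tc_map_trace_class[OF instrument_tc_map[OF I] tc]]
    by simp
qed

lemma success_probs_refine_inconclusive:
  assumes "instrument I" "instrument I'" "density_op (\<rho> j)"
  shows "success_probs \<rho> (refine_inconclusive I I') j =
    success_probs \<rho> I j + Re (trace (I' (Some j) (I None (\<rho> j))))"
    and "Re (trace (I' (Some j) (I None (\<rho> j)))) \<ge> 0"
proof -
  have tc: "trace_class (\<rho> j)" and pos: "positive_opr (\<rho> j)"
    using assms(3) unfolding density_op_def by auto
  show "success_probs \<rho> (refine_inconclusive I I') j =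
      success_probs \<rho> I j + Re (trace (I' (Some j) (I None (\<rho> j))))"
    using trace_refine_inconclusive_Some[OF assms(1,2) tc] by (simp add: success_probs_def)
  show "Re (trace (I' (Some j) (I None (\<rho> j)))) \<ge> 0"
    using instrument_trace_nonneg(2)[OF assms(2)
        tc_map_trace_class[OF instrument_tc_map[OF assms(1)] tc]
        completely_positive_imp_positive[OF instrument_completely_positive[OF assms(1)] tc pos]] .
qed

lemma success_probs_le_SUP:
  assumes "\<forall>j. density_op (\<rho> j)" "instrument I"
  shows "success_probs \<rho> I k \<le> (SUP j. success_probs \<rho> I j)"
  using success_probs_le_1[OF assms(2)] assms(1) by (intro cSUP_upper bdd_aboveI) auto

lemma refine_inconclusive_gain_ge:
  assumes dens: "\<forall>j. density_op (\<rho> j)" and uud: "uud_measurement \<rho> I"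
    and sup: "(SUP j. success_probs \<rho> I j) < 1"
    and uud': "uud_measurement (\<lambda>j. normalized (I None (\<rho> j))) I'"
  shows "(1 - (SUP j. success_probs \<rho> I j)) * (INF j. success_probs (\<lambda>j. normalized (I None (\<rho> j))) I' j)
    \<le> success_probs \<rho> (refine_inconclusive I I') j - success_probs \<rho> I j"
proof -
  define p where "p = success_probs \<rho> I"
  define q where "q = success_probs (\<lambda>j. normalized (I None (\<rho> j))) I'"
  define r where "r = success_probs \<rho> (refine_inconclusive I I')"
  have I: "instrument I" and I': "instrument I'"
    using uud uud' unfolding uud_measurement_def by blast+
  have p_le_sup: "p k \<le> (SUP j. p j)" for k
    unfolding p_def by (rule success_probs_le_SUP[OF dens I])
  then have p_lt_1: "p k < 1" for k
    using sup unfolding p_def by (meson order_le_less_trans)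
  have gain: "r k - p k = (1 - p k) * q k" and gain_nonneg: "r k - p k \<ge> 0" for k
    using success_probs_refine_inconclusive[OF I I', of \<rho> k] dens
      trace_refine_inconclusive_normalized[OF dens uud I' p_lt_1[unfolded p_def], of k]
    unfolding r_def p_def q_def by (simp_all add: success_probs_def)
  have "q k \<ge> 0" for k
    using gain[of k] gain_nonneg[of k] p_lt_1[of k] by (simp add: zero_le_mult_iff)
  then have "(INF k. q k) \<le> q j"
    by (intro cINF_lower bdd_belowI[of _ 0]) auto
  moreover have "(INF k. q k) > 0"
    using uud' unfolding q_def uud_measurement_def success_probs_def by simp
  ultimately show ?thesis
    using p_le_sup[of j] p_lt_1[of j]
    unfolding p_def[symmetric] q_def[symmetric] r_def[symmetric] gain
    by (intro mult_mono) auto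
qed

lemma refine_inconclusive_improves:
  assumes dens: "\<forall>j. density_op (\<rho> j)" and uud: "uud_measurement \<rho> I"
    and sup: "(SUP j. success_probs \<rho> I j) < 1"
    and uud': "uud_measurement (\<lambda>j. normalized (I None (\<rho> j))) I'"
  shows "uud_measurement \<rho> (refine_inconclusive I I')"
    and "(INF j. success_probs \<rho> (refine_inconclusive I I') j - success_probs \<rho> I j) > 0"
proof -
  define p where "p = success_probs \<rho> I"
  define r where "r = success_probs \<rho> (refine_inconclusive I I')"
  define c where "c = (1 - (SUP j. p j)) * (INF j. success_probs (\<lambda>j. normalized (I None (\<rho> j))) I' j)"
  have I: "instrument I" and I': "instrument I'"
    using uud uud' unfolding uud_measurement_def by blast+
  have c_pos: "c > 0"
    using sup uud' unfolding c_def p_def uud_measurement_def success_probs_def by simp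
  have gain_ge: "c \<le> r j - p j" for j
    using refine_inconclusive_gain_ge[OF assms] unfolding c_def r_def p_def .
  have "c \<le> (INF j. r j - p j)"
    using gain_ge by (rule cINF_greatest[rotated]) simp
  with c_pos show "(INF j. success_probs \<rho> (refine_inconclusive I I') j - success_probs \<rho> I j) > 0"
    unfolding r_def p_def by linarith
  have "c \<le> (INF j. r j)"
  proof (rule cINF_greatest)
    fix j
    show "c \<le> r j"
      using gain_ge[of j] success_probs_pos[OF dens uud, of j] unfolding p_def by linarith
  qed simp
  with c_pos have inf_r: "(INF j. r j) > 0"
    by linarith
  have unambiguous: "trace (refine_inconclusive I I' (Some j) (\<rho> k)) = 0" if "j \<noteq> k" for j k
  proof -
    have "success_probs \<rho> I k < 1"
      using success_probs_le_SUP[OF dens I, of k] sup by linarith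
    moreover have "trace (I (Some j) (\<rho> k)) = 0" "trace (I' (Some j) (normalized (I None (\<rho> k)))) = 0"
      using uud uud' that unfolding uud_measurement_def by blast+
    ultimately show ?thesis
      using trace_refine_inconclusive_normalized[OF dens uud I', of k j] by simp
  qed
  show "uud_measurement \<rho> (refine_inconclusive I I')"
    using instrument_refine_inconclusive[OF I I'] unambiguous inf_r
    unfolding uud_measurement_def r_def success_probs_def by simp
qed

lemma evaluation_functionD:
  assumes "evaluation_function f" "\<forall>j. x j \<in> {0<..1}" "\<forall>j. y j \<in> {0<..1}"
    "(INF j. x j - y j) > 0"
  shows "f x > f y"
  using assms unfolding evaluation_function_def by force

theorem mainTheorem2:
  fixes \<rho> :: "'j::countable \<Rightarrow> 'b::countable opr"
    and f :: "('j \<Rightarrow> real) \<Rightarrow> real"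
    and I :: "'j option \<Rightarrow> 'b opr \<Rightarrow> 'b opr"
  assumes "\<forall>j. density_op (\<rho> j)"
    and "evaluation_function f"
    and "optimal_uud f \<rho> I"
    and "(SUP j. Re (trace (I (Some j) (\<rho> j)))) < 1"
  shows "\<not> uniformly_distinguishable
           (\<lambda>j. (\<lambda>a b. I None (\<rho> j) a b / trace (I None (\<rho> j))))"
proof
  assume "uniformly_distinguishable (\<lambda>j. (\<lambda>a b. I None (\<rho> j) a b / trace (I None (\<rho> j))))"
  then obtain I' where I': "uud_measurement (\<lambda>j. normalized (I None (\<rho> j))) I'"
    unfolding uniformly_distinguishable_def normalized_def by blast
  have uud: "uud_measurement \<rho> I"
    and optimal: "\<not> (\<exists>J. uud_measurement \<rho> J \<and> f (success_probs \<rho> J) > f (success_probs \<rho> I))"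
    using assms(3) unfolding optimal_uud_def by blast+
  have sup: "(SUP j. success_probs \<rho> I j) < 1"
    using assms(4) by (simp add: success_probs_def)
  let ?J = "refine_inconclusive I I'"
  note uud_J = refine_inconclusive_improves(1)[OF assms(1) uud sup I']
  have "f (success_probs \<rho> ?J) > f (success_probs \<rho> I)"
    using success_probs_mem_unit_interval[OF assms(1)] uud_J uud
      refine_inconclusive_improves(2)[OF assms(1) uud sup I']
    by (intro evaluation_functionD[OF assms(2)]) auto
  then show False
    using optimal uud_J by auto
qed

end
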